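(* Fix an Outcome Logic instance with execution model $\langle M,\mathsf{bind},\mathsf{unit},\diamond,\varnothing\rangle$ and set of program states $\Sigma$. For every program $C$ and all semantic assertions $\Phi,\Psi\subseteq M\Sigma$: \[ \not\vDash_S\langle\Phi\rangle\, C\,\langle\Psi\rangle \quad\text{iff}\quad \exists\,\Phi'\subseteq M\Sigma \text{ such that } \Phi'\subseteq\Phi,\ \Phi'\neq\emptyset,\ \text{and } \vDash_S\langle\Phi'\rangle\, C\,\langle M\Sigma\setminus\Psi\rangle . \]
   Context: An execution model is a tuple $\langle M,\mathsf{bind},\mathsf{unit},\diamond,\varnothing\rangle$ where $\langle M,\mathsf{bind},\mathsf{unit}\rangle$ is a monad on the category of sets and, for every set $A$, $(MA,\diamond,\varnothing)$ is a partial commutative monoid (a partial associative commutative binary operation $\diamond$ with unit $\varnothing$) such that $\mathsf{bind}(m_1\diamond m_2,k)=\mathsf{bind}(m_1,k)\diamond\mathsf{bind}(m_2,k)$ and $\mathsf{bind}(\varnothing,k)=\varnothing$. For $f\colon A\to MB$ write $f^\dagger(m)=\mathsf{bind}(m,f)$. An Outcome Logic (OL) instance additionally fixes a set $\Sigma$ of program states and atomic-command semantics $[\![c]\!]_{\mathsf{atom}}\colon\Sigma\to M\Sigma$. Programs are $C::=\mathbb{0}\mid\mathbb{1}\mid C_1; C_2\mid C_1+C_2\mid C^\star\mid c$ with $[\![\mathbb{0}]\!](\sigma)=\varnothing$, $[\![\mathbb{1}]\!](\sigma)=\mathsf{unit}(\sigma)$, $[\![C_1;C_2]\!](\sigma)=\mathsf{bind}([\![C_1]\!](\sigma),[\![C_2]\!])$,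 $[\![C_1+C_2]\!](\sigma)=[\![C_1]\!](\sigma)\diamond[\![C_2]\!](\sigma)$, $[\![C^\star]\!]$ the least fixed point of $f\mapsto\lambda\sigma.\,f^\dagger([\![C]\!](\sigma))\diamond\mathsf{unit}(\sigma)$, and $[\![c]\!]=[\![c]\!]_{\mathsf{atom}}$. A semantic assertion is a subset of $M\Sigma$; the semantic triple $\vDash_S\langle\Phi\rangle C\langle\Psi\rangle$ holds iff for all $m\in M\Sigma$, $m\in\Phi$ implies $[\![C]\!]^\dagger(m)\in\Psi$. *)

theory Defs
  imports Main
begin

datatype 'c prog = Zero | One | Seq "'c prog" "'c prog" | Plus "'c prog" "'c prog"
  | Star "'c prog" | Atom 'c

text \<open>An execution model, instantiated at the set of program states 's, whose
  carrier M(Sigma) is the type 'm.  The partial monoid operation is a total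
  function dia together with a definedness predicate defd.\<close>
definition execution_model ::
  "('m \<Rightarrow> ('s \<Rightarrow> 'm) \<Rightarrow> 'm) \<Rightarrow> ('s \<Rightarrow> 'm) \<Rightarrow> ('m \<Rightarrow> 'm \<Rightarrow> 'm)
   \<Rightarrow> ('m \<Rightarrow> 'm \<Rightarrow> bool) \<Rightarrow> 'm \<Rightarrow> bool" where
  "execution_model bind unit dia defd emp \<longleftrightarrow>
     (\<forall>x f. bind (unit x) f = f x) \<and>
     (\<forall>m. bind m unit = m) \<and>
     (\<forall>m f g. bind (bind m f) g = bind m (\<lambda>x. bind (f x) g)) \<and>
     (\<forall>m. defd m emp \<and> dia m emp = m) \<and>
     (\<forall>a b. defd a b \<longrightarrow> defd b a \<and> dia a b = dia b a) \<and>
     (\<forall>a b c. (defd a b \<and> defd (dia a b) c) \<longleftrightarrow> (defd b c \<and> defd a (dia b c))) \<and>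
     (\<forall>a b c. defd a b \<and> defd (dia a b) c \<longrightarrow> dia (dia a b) c = dia a (dia b c)) \<and>
     (\<forall>m1 m2 k. defd m1 m2 \<longrightarrow>
        defd (bind m1 k) (bind m2 k) \<and> bind (dia m1 m2) k = dia (bind m1 k) (bind m2 k)) \<and>
     (\<forall>k. bind emp k = emp)"

text \<open>Order on M(Sigma) with respect to which the least fixed point for the
  iteration is taken (assumed to be a partial order).\<close>
definition ol_instance ::
  "('m \<Rightarrow> ('s \<Rightarrow> 'm) \<Rightarrow> 'm) \<Rightarrow> ('s \<Rightarrow> 'm) \<Rightarrow> ('m \<Rightarrow> 'm \<Rightarrow> 'm)
   \<Rightarrow> ('m \<Rightarrow> 'm \<Rightarrow> bool) \<Rightarrow> 'm \<Rightarrow> ('m \<Rightarrow> 'm \<Rightarrow> bool) \<Rightarrow> bool" where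
  "ol_instance bind unit dia defd emp le \<longleftrightarrow>
     execution_model bind unit dia defd emp \<and>
     (\<forall>x. le x x) \<and> (\<forall>x y. le x y \<and> le y x \<longrightarrow> x = y) \<and>
     (\<forall>x y z. le x y \<and> le y z \<longrightarrow> le x z)"

definition least_fp :: "('m \<Rightarrow> 'm \<Rightarrow> bool) \<Rightarrow> (('s \<Rightarrow> 'm) \<Rightarrow> ('s \<Rightarrow> 'm)) \<Rightarrow> 's \<Rightarrow> 'm" where
  "least_fp le F = (THE g. F g = g \<and> (\<forall>h. F h = h \<longrightarrow> (\<forall>s. le (g s) (h s))))"

fun sem :: "('m \<Rightarrow> ('s \<Rightarrow> 'm) \<Rightarrow> 'm) \<Rightarrow> ('s \<Rightarrow> 'm) \<Rightarrow> ('m \<Rightarrow> 'm \<Rightarrow> 'm) \<Rightarrow> 'm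
    \<Rightarrow> ('m \<Rightarrow> 'm \<Rightarrow> bool) \<Rightarrow> ('c \<Rightarrow> 's \<Rightarrow> 'm) \<Rightarrow> 'c prog \<Rightarrow> 's \<Rightarrow> 'm" where
  "sem bind unit dia emp le atom Zero = (\<lambda>\<sigma>. emp)"
| "sem bind unit dia emp le atom One = unit"
| "sem bind unit dia emp le atom (Seq C1 C2) =
     (\<lambda>\<sigma>. bind (sem bind unit dia emp le atom C1 \<sigma>) (sem bind unit dia emp le atom C2))"
| "sem bind unit dia emp le atom (Plus C1 C2) =
     (\<lambda>\<sigma>. dia (sem bind unit dia emp le atom C1 \<sigma>) (sem bind unit dia emp le atom C2 \<sigma>))"
| "sem bind unit dia emp le atom (Star C) =
     least_fp le (\<lambda>f \<sigma>. dia (bind (sem bind unit dia emp le atom C \<sigma>) f) (unit \<sigma>))"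
| "sem bind unit dia emp le atom (Atom c) = atom c"

definition triple :: "('m \<Rightarrow> ('s \<Rightarrow> 'm) \<Rightarrow> 'm) \<Rightarrow> ('s \<Rightarrow> 'm) \<Rightarrow> ('m \<Rightarrow> 'm \<Rightarrow> 'm) \<Rightarrow> 'm
    \<Rightarrow> ('m \<Rightarrow> 'm \<Rightarrow> bool) \<Rightarrow> ('c \<Rightarrow> 's \<Rightarrow> 'm) \<Rightarrow> 'm set \<Rightarrow> 'c prog \<Rightarrow> 'm set \<Rightarrow> bool" where
  "triple bind unit dia emp le atom \<Phi> C \<Psi> \<longleftrightarrow>
     (\<forall>m. m \<in> \<Phi> \<longrightarrow> bind m (sem bind unit dia emp le atom C) \<in> \<Psi>)"

end

theory Submission
  imports Defs
begin

lemma triple_singleton: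
  "triple bind unit dia emp le atom {m} C \<Psi> \<longleftrightarrow> bind m (sem bind unit dia emp le atom C) \<in> \<Psi>"
  by (simp add: triple_def)

lemma triple_mono_pre:
  assumes "\<Phi>' \<subseteq> \<Phi>" and "triple bind unit dia emp le atom \<Phi> C \<Psi>"
  shows "triple bind unit dia emp le atom \<Phi>' C \<Psi>"
  using assms by (auto simp: triple_def)

lemma triple_compl_empty_pre:
  assumes "triple bind unit dia emp le atom \<Phi> C \<Psi>"
    and "triple bind unit dia emp le atom \<Phi> C (UNIV - \<Psi>)"
  shows "\<Phi> = {}"
  using assms by (auto simp: triple_def)

theorem theorem5p1:
  fixes bind :: "'m \<Rightarrow> ('s \<Rightarrow> 'm) \<Rightarrow> 'm" and unit :: "'s \<Rightarrow> 'm"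
    and dia :: "'m \<Rightarrow> 'm \<Rightarrow> 'm" and defd :: "'m \<Rightarrow> 'm \<Rightarrow> bool" and emp :: 'm
    and le :: "'m \<Rightarrow> 'm \<Rightarrow> bool" and atom :: "'c \<Rightarrow> 's \<Rightarrow> 'm"
    and C :: "'c prog" and \<Phi> \<Psi> :: "'m set"
  assumes "ol_instance bind unit dia defd emp le"
  shows "\<not> triple bind unit dia emp le atom \<Phi> C \<Psi> \<longleftrightarrow>
    (\<exists>\<Phi>'. \<Phi>' \<subseteq> \<Phi> \<and> \<Phi>' \<noteq> {} \<and> triple bind unit dia emp le atom \<Phi>' C (UNIV - \<Psi>))"
proof
  assume "\<not> triple bind unit dia emp le atom \<Phi> C \<Psi>"
  then obtain m where "m \<in> \<Phi>" and "bind m (sem bind unit dia emp le atom C) \<notin> \<Psi>"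
    by (auto simp: triple_def)
  then have "{m} \<subseteq> \<Phi> \<and> {m} \<noteq> {} \<and> triple bind unit dia emp le atom {m} C (UNIV - \<Psi>)"
    by (simp add: triple_singleton)
  then show "\<exists>\<Phi>'. \<Phi>' \<subseteq> \<Phi> \<and> \<Phi>' \<noteq> {} \<and> triple bind unit dia emp le atom \<Phi>' C (UNIV - \<Psi>)"
    by blast
next
  assume "\<exists>\<Phi>'. \<Phi>' \<subseteq> \<Phi> \<and> \<Phi>' \<noteq> {} \<and> triple bind unit dia emp le atom \<Phi>' C (UNIV - \<Psi>)"
  then obtain \<Phi>' where "\<Phi>' \<subseteq> \<Phi>" and "\<Phi>' \<noteq> {}"
    and falsified: "triple bind unit dia emp le atom \<Phi>' C (UNIV - \<Psi>)"
    by blast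
  show "\<not> triple bind unit dia emp le atom \<Phi> C \<Psi>"
  proof
    assume "triple bind unit dia emp le atom \<Phi> C \<Psi>"
    with \<open>\<Phi>' \<subseteq> \<Phi>\<close> have "triple bind unit dia emp le atom \<Phi>' C \<Psi>"
      by (rule triple_mono_pre)
    then have "\<Phi>' = {}"
      using falsified by (rule triple_compl_empty_pre)
    with \<open>\<Phi>' \<noteq> {}\<close> show False ..
  qed
qed

end
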